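(* Let $a_1,\dots,a_n$ be positive integers, let $\mathcal{G}=\mathcal{G}[a_1,\dots,a_n]$, let $\mathcal{G}_{\leftrightarrow}=\mathcal{G}[a_n,\dots,a_2,a_1,a_1,a_2,\dots,a_n]$ (the palindromification of $\mathcal{G}$), and let $\mathcal{G}'=\mathcal{G}[a_2,\dots,a_n]$. Then \[ m(\mathcal{G}_{\leftrightarrow})=m(\mathcal{G})^2+m(\mathcal{G}')^2. \]
   Context: A tile is a unit square in the plane with sides parallel to the coordinate axes, viewed as a graph with 4 vertices and 4 edges. A snake graph with $d\ge 1$ tiles is a planar graph which is the union of tiles $G_1,\dots,G_d$ such that for each $i$, $G_{i+1}$ is the translate of $G_i$ by $(0,1)$ or by $(1,0)$; thus $G_i$ and $G_{i+1}$ share exactly one edge $e_i$. A sign function on a snake graph is a map $f$ from its edges to $\{+,-\}$ such that in every tile the north and west edges have the same sign, the south and east edges have the same sign, and the north and south edges have opposite signs. For a sequence $(a_1,\dots,a_n)$ of positive integers with $d=a_1+\cdots+a_n-1\ge 1$, $\mathcal{G}[a_1,\dots,a_n]$ is the unique snake graph with tiles $G_1,\dots,G_d$ for which there exist a sign function $f$ and an edge $e_d\in\{\text{north edge of }G_d,\text{east edge of }G_d\}$ such that, with $e_0$ the south edge of $G_1$ and $e_i$ ($1\le i\le d-1$) the edge shared by $G_i,G_{i+1}$, the sequence $(f(e_0),\dots,f(e_d))$ consists of $a_1$ copies of a sign $s$, then $a_2$ copies of $-s$, then $a_3$ copies of $s$, and so on alternately. By convention $\mathcal{G}[1]$ is a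 single edge, and the snake graph of the empty sequence (which occurs as $\mathcal{G}'$ when $n=1$) is a single edge. For a graph $\mathcal{H}$, $m(\mathcal{H})$ denotes its number of perfect matchings (a single edge has exactly one). *)

theory Defs
  imports Main
begin

type_synonym pt = "int \<times> int"
type_synonym graph = "pt set \<times> pt set set"

text \<open>A snake graph with d tiles is encoded by the list ds of d-1 steps:
  True = translate by (1,0) (east), False = translate by (0,1) (north).
  The first tile G_1 (index 0 here) has lower-left corner (0,0).\<close>
definition tile_pos :: "bool list \<Rightarrow> nat \<Rightarrow> pt" where
  "tile_pos ds i = (int (length (filter id (take i ds))), int (length (filter Not (take i ds))))"

definition south_edge :: "bool list \<Rightarrow> nat \<Rightarrow> pt set" where
  "south_edge ds i = (case tile_pos ds i of (x,y) \<Rightarrow> {(x,y),(x+1,y)})"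
definition north_edge :: "bool list \<Rightarrow> nat \<Rightarrow> pt set" where
  "north_edge ds i = (case tile_pos ds i of (x,y) \<Rightarrow> {(x,y+1),(x+1,y+1)})"
definition west_edge :: "bool list \<Rightarrow> nat \<Rightarrow> pt set" where
  "west_edge ds i = (case tile_pos ds i of (x,y) \<Rightarrow> {(x,y),(x,y+1)})"
definition east_edge :: "bool list \<Rightarrow> nat \<Rightarrow> pt set" where
  "east_edge ds i = (case tile_pos ds i of (x,y) \<Rightarrow> {(x+1,y),(x+1,y+1)})"

definition tile_vertices :: "bool list \<Rightarrow> nat \<Rightarrow> pt set" where
  "tile_vertices ds i = (case tile_pos ds i of (x,y) \<Rightarrow> {(x,y),(x+1,y),(x,y+1),(x+1,y+1)})"

definition tile_edges :: "bool list \<Rightarrow> nat \<Rightarrow> pt set set" where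
  "tile_edges ds i = {south_edge ds i, north_edge ds i, west_edge ds i, east_edge ds i}"

definition snake_graph :: "bool list \<Rightarrow> graph" where
  "snake_graph ds = ((\<Union>i\<le>length ds. tile_vertices ds i), (\<Union>i\<le>length ds. tile_edges ds i))"

text \<open>The edge shared by tiles i and i+1 (0-indexed).\<close>
definition shared_edge :: "bool list \<Rightarrow> nat \<Rightarrow> pt set" where
  "shared_edge ds i = (if ds ! i then east_edge ds i else north_edge ds i)"

definition sign_function :: "bool list \<Rightarrow> (pt set \<Rightarrow> bool) \<Rightarrow> bool" where
  "sign_function ds f \<longleftrightarrow> (\<forall>i\<le>length ds.
     f (north_edge ds i) = f (west_edge ds i) \<and>
     f (south_edge ds i) = f (east_edge ds i) \<and>
     f (north_edge ds i) \<noteq> f (south_edge ds i))"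

definition edge_seq :: "bool list \<Rightarrow> pt set \<Rightarrow> pt set list" where
  "edge_seq ds ed = [south_edge ds 0] @ map (shared_edge ds) [0..<length ds] @ [ed]"

definition alt_signs :: "bool \<Rightarrow> nat list \<Rightarrow> bool list" where
  "alt_signs s as = concat (map (\<lambda>k. replicate (as ! k) (if even k then s else \<not> s)) [0..<length as])"

definition single_edge :: graph where
  "single_edge = ({(0,0),(1,0)}, {{(0,0),(1,0)}})"

text \<open>is_G as H: H is the snake graph G[a_1,...,a_n] (placed with first tile at the origin);
  for a_1+...+a_n - 1 < 1 (i.e. the sequence [1] or the empty sequence) it is a single edge.\<close>
definition is_G :: "nat list \<Rightarrow> graph \<Rightarrow> bool" where
  "is_G as H \<longleftrightarrow>
    (if sum_list as \<ge> 2 then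
       (\<exists>ds. length ds + 2 = sum_list as \<and> H = snake_graph ds \<and>
          (\<exists>f s ed. sign_function ds f \<and>
              ed \<in> {north_edge ds (length ds), east_edge ds (length ds)} \<and>
              map f (edge_seq ds ed) = alt_signs s as))
     else H = single_edge)"

definition perfect_matchings :: "graph \<Rightarrow> pt set set set" where
  "perfect_matchings H = {M. M \<subseteq> snd H \<and> (\<forall>v\<in>fst H. \<exists>!e. e \<in> M \<and> v \<in> e)}"

definition num_pm :: "graph \<Rightarrow> nat" where
  "num_pm H = card (perfect_matchings H)"

end

theory Submission
  imports Defs
begin

text \<open>Build the snake graph tile by tile.  If m and m' count the perfect matchings of the
  graph and of the graph without the endpoints of its final edge, gluing on the next tile maps
  (m, m') to (m + m', m) when the snake goes straight and to (m + m', m') when it turns.  The sign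
  function changes sign exactly at the straight steps, so the number of perfect matchings of
  G[a_1, ..., a_n] is the continuant K(a_1, ..., a_n).  The continuant is an entry of the product
  of the symmetric matrices [[a_i, 1], [1, 0]]; reversing the sequence transposes the product,
  and multiplying the product for a_n, ..., a_1 by its transpose gives
  K(a_n, ..., a_1, a_1, ..., a_n) = K(a_1, ..., a_n)^2 + K(a_2, ..., a_n)^2.\<close>

section \<open>Continuants\<close>

fun continuant_fold :: "nat list \<Rightarrow> nat \<times> nat \<Rightarrow> nat \<times> nat" where
  "continuant_fold [] v = v"
| "continuant_fold (a # as) (x, y) = continuant_fold as (a * x + y, x)"

definition continuant :: "nat list \<Rightarrow> nat" where
  "continuant as = fst (continuant_fold as (1, 0))"

fun pair_dot :: "nat \<times> nat \<Rightarrow> nat \<times> nat \<Rightarrow> nat" where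
  "pair_dot (x, y) (x', y') = x * x' + y * y'"

lemma continuant_fold_append:
  "continuant_fold (xs @ ys) v = continuant_fold ys (continuant_fold xs v)"
  by (induction xs v rule: continuant_fold.induct) auto

text \<open>\<^const>\<open>continuant_fold\<close> applies a product of the symmetric matrices
  [[a,1],[1,0]], so reversing the list transposes the product.\<close>
lemma pair_dot_continuant_fold_rev:
  "pair_dot (continuant_fold as v) w = pair_dot v (continuant_fold (rev as) w)"
proof (induction as arbitrary: v)
  case Nil
  show ?case by simp
next
  case (Cons a as)
  obtain x y where v: "v = (x, y)" by fastforce
  obtain x' y' where w: "continuant_fold (rev as) w = (x', y')" by fastforce
  have "pair_dot (continuant_fold (a # as) v) w = pair_dot (a * x + y, x) (x', y')"
    using Cons.IH w by (simp add: v)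
  also have "\<dots> = pair_dot (x, y) (a * x' + y', x')"
    by (simp add: algebra_simps)
  also have "\<dots> = pair_dot v (continuant_fold (rev (a # as)) w)"
    using w by (simp add: v continuant_fold_append)
  finally show ?case .
qed

lemma pair_dot_commute: "pair_dot v w = pair_dot w v"
  by (cases v; cases w) simp

lemma fst_eq_pair_dot: "fst v = pair_dot v (1, 0)"
  by (cases v) simp

lemma continuant_rev_append:
  assumes "as \<noteq> []"
  shows "continuant (rev as @ as) = continuant as ^ 2 + continuant (tl as) ^ 2"
proof -
  obtain a t where as: "as = a # t" using assms by (cases as) auto
  define u where "u = continuant_fold (rev as) (1, 0)"
  have "fst u = pair_dot (1, 0) (continuant_fold as (1, 0))"
    using pair_dot_continuant_fold_rev[of "rev as" "(1, 0)" "(1, 0)"]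
    by (simp add: u_def fst_eq_pair_dot)
  then have fst_u: "fst u = continuant as"
    by (simp add: continuant_def fst_eq_pair_dot pair_dot_commute)
  have "snd u = pair_dot u (0, 1)"
    by (cases u) simp
  also have "\<dots> = pair_dot (1, 0) (continuant_fold as (0, 1))"
    using pair_dot_continuant_fold_rev[of "rev as" "(1, 0)" "(0, 1)"] by (simp add: u_def)
  finally have snd_u: "snd u = continuant (tl as)"
    by (simp add: as continuant_def fst_eq_pair_dot pair_dot_commute)
  have "continuant (rev as @ as) = pair_dot (continuant_fold as u) (1, 0)"
    by (simp add: continuant_def continuant_fold_append u_def fst_eq_pair_dot)
  also have "\<dots> = pair_dot u u"
    by (simp add: pair_dot_continuant_fold_rev u_def)
  also have "\<dots> = fst u ^ 2 + snd u ^ 2"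
    by (cases u) (simp add: power2_eq_square)
  finally show ?thesis
    by (simp add: fst_u snd_u)
qed

section \<open>Sign changes and the matching recurrence\<close>

fun changes :: "bool list \<Rightarrow> bool list" where
  "changes (x # y # zs) = (x \<noteq> y) # changes (y # zs)"
| "changes _ = []"

lemma length_changes: "length (changes xs) = length xs - 1"
  by (induction xs rule: changes.induct) auto

lemma nth_changes: "j < length xs - 1 \<Longrightarrow> changes xs ! j = (xs ! j \<noteq> xs ! Suc j)"
  by (induction xs arbitrary: j rule: changes.induct) (auto simp: nth_Cons split: nat.split)

lemma changes_snoc: "changes (xs @ [y, z]) = changes (xs @ [y]) @ [y \<noteq> z]"
  by (induction xs rule: changes.induct) auto

fun matching_run :: "bool list \<Rightarrow> nat \<times> nat \<Rightarrow> nat \<times> nat" where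
  "matching_run [] v = v"
| "matching_run (c # cs) (m, m') = matching_run cs (m + m', if c then m else m')"

lemma matching_run_snoc:
  "matching_run (cs @ [c]) v = (case matching_run cs v of (m, m') \<Rightarrow> (m + m', if c then m else m'))"
  by (induction cs v rule: matching_run.induct) auto

lemma alt_signs_Nil: "alt_signs s [] = []"
  by (simp add: alt_signs_def)

lemma alt_signs_Cons: "alt_signs s (a # as) = replicate a s @ alt_signs (\<not> s) as"
proof -
  have "alt_signs (\<not> s) as = concat (map (\<lambda>k. replicate (as ! k) (if odd k then s else \<not> s)) [0..<length as])"
    unfolding alt_signs_def by (intro arg_cong[where f = concat] map_cong) auto
  moreover have "[0..<length (a # as)] = 0 # map Suc [0..<length as]"
    by (simp add: upt_conv_Cons map_Suc_upt del: upt_Suc)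
  ultimately show ?thesis
    by (simp add: alt_signs_def comp_def)
qed

lemma matching_run_changes_replicate:
  "matching_run (changes (s # replicate k s @ rest)) (m, m') =
   matching_run (changes (s # rest)) (m + k * m', m')"
  by (induction k arbitrary: m) (auto simp: algebra_simps)

lemma matching_run_changes_alt_signs:
  assumes "\<forall>a\<in>set as. 0 < a"
  shows "matching_run (changes ((\<not> s) # alt_signs s as)) (m, m') = continuant_fold as (m, m')"
  using assms
proof (induction as arbitrary: s m m')
  case Nil
  show ?case by (simp add: alt_signs_Nil)
next
  case (Cons a as)
  then obtain k where a: "a = Suc k" by (cases a) auto
  have "matching_run (changes ((\<not> s) # alt_signs s (a # as))) (m, m') =
        matching_run (changes (s # replicate k s @ alt_signs (\<not> s) as)) (m + m', m)"
    by (simp add: alt_signs_Cons a)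
  also have "\<dots> = matching_run (changes ((\<not> \<not> s) # alt_signs (\<not> s) as)) (m + m' + k * m, m)"
    by (simp add: matching_run_changes_replicate)
  also have "\<dots> = continuant_fold (a # as) (m, m')"
    using Cons.IH[of "\<not> s"] Cons.prems by (simp add: a algebra_simps)
  finally show ?case .
qed

section \<open>Perfect matchings\<close>

definition delete_vertices :: "graph \<Rightarrow> pt set \<Rightarrow> graph" where
  "delete_vertices H S = (fst H - S, {e \<in> snd H. e \<inter> S = {}})"

lemma perfect_matchings_iff:
  "M \<in> perfect_matchings H \<longleftrightarrow> M \<subseteq> snd H \<and> (\<forall>v\<in>fst H. \<exists>e\<in>M. v \<in> e) \<and>
     (\<forall>v\<in>fst H. \<forall>e\<in>M. \<forall>e'\<in>M. v \<in> e \<longrightarrow> v \<in> e' \<longrightarrow> e = e')"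
  unfolding perfect_matchings_def by (auto simp: Ex1_def) metis+

lemma finite_perfect_matchings: "finite (snd H) \<Longrightarrow> finite (perfect_matchings H)"
  unfolding perfect_matchings_def by (rule finite_subset[of _ "Pow (snd H)"]) auto

lemma perfect_matching_Diff_edge:
  assumes M: "M \<in> perfect_matchings H" and "e \<in> M" and "e \<subseteq> fst H"
  shows "M - {e} \<in> perfect_matchings (delete_vertices H e)"
proof -
  have sub: "M \<subseteq> snd H" and cov: "\<forall>v\<in>fst H. \<exists>e'\<in>M. v \<in> e'"
    and uniq: "\<forall>v\<in>fst H. \<forall>e1\<in>M. \<forall>e2\<in>M. v \<in> e1 \<longrightarrow> v \<in> e2 \<longrightarrow> e1 = e2"
    using M unfolding perfect_matchings_iff by auto
  have "e' \<inter> e = {}" if "e' \<in> M" "e' \<noteq> e" for e'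
    using uniq \<open>e \<in> M\<close> \<open>e \<subseteq> fst H\<close> that by blast
  then have "M - {e} \<subseteq> {e' \<in> snd H. e' \<inter> e = {}}"
    using sub by blast
  moreover have "\<forall>v\<in>fst H - e. \<exists>e'\<in>M - {e}. v \<in> e'"
    using cov by blast
  moreover have "\<forall>v\<in>fst H - e. \<forall>e1\<in>M - {e}. \<forall>e2\<in>M - {e}. v \<in> e1 \<longrightarrow> v \<in> e2 \<longrightarrow> e1 = e2"
    using uniq by blast
  ultimately show ?thesis
    unfolding perfect_matchings_iff delete_vertices_def by simp
qed

lemma perfect_matching_insert_edge:
  assumes M: "M \<in> perfect_matchings (delete_vertices H e)" and "e \<in> snd H"
  shows "insert e M \<in> perfect_matchings H"
proof -
  have sub: "M \<subseteq> {e' \<in> snd H. e' \<inter> e = {}}" and cov: "\<forall>v\<in>fst H - e. \<exists>e'\<in>M. v \<in> e'"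
    and uniq: "\<forall>v\<in>fst H - e. \<forall>e1\<in>M. \<forall>e2\<in>M. v \<in> e1 \<longrightarrow> v \<in> e2 \<longrightarrow> e1 = e2"
    using M unfolding perfect_matchings_iff delete_vertices_def by auto
  have "e1 = e2" if "v \<in> fst H" "e1 \<in> insert e M" "e2 \<in> insert e M" "v \<in> e1" "v \<in> e2" for v e1 e2
  proof (cases "v \<in> e")
    case True
    then have "e1 = e" "e2 = e"
      using that sub by blast+
    then show ?thesis by simp
  next
    case False
    then have "e1 \<in> M" "e2 \<in> M"
      using that by auto
    with False that uniq show ?thesis by blast
  qed
  moreover have "insert e M \<subseteq> snd H"
    using sub \<open>e \<in> snd H\<close> by blast
  moreover have "\<forall>v\<in>fst H. \<exists>e'\<in>insert e M. v \<in> e'"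
    using cov by blast
  ultimately show ?thesis
    unfolding perfect_matchings_iff by blast
qed

lemma card_perfect_matchings_containing:
  assumes "e \<in> snd H" "e \<subseteq> fst H" "e \<noteq> {}"
  shows "card {M \<in> perfect_matchings H. e \<in> M} = num_pm (delete_vertices H e)"
  unfolding num_pm_def
proof (rule bij_betw_same_card, rule bij_betw_byWitness[where f' = "insert e"])
  have "e \<notin> M" if "M \<in> perfect_matchings (delete_vertices H e)" for M
    using that \<open>e \<noteq> {}\<close> unfolding perfect_matchings_iff delete_vertices_def by auto
  then show "\<forall>M\<in>perfect_matchings (delete_vertices H e). insert e M - {e} = M"
    by blast
  show "(\<lambda>M. M - {e}) ` {M \<in> perfect_matchings H. e \<in> M} \<subseteq> perfect_matchings (delete_vertices H e)"
    using perfect_matching_Diff_edge assms by blast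
  show "insert e ` perfect_matchings (delete_vertices H e) \<subseteq> {M \<in> perfect_matchings H. e \<in> M}"
    using perfect_matching_insert_edge assms by blast
qed blast

lemma perfect_matching_edge_at:
  assumes "M \<in> perfect_matchings H" "w \<in> fst H"
  obtains e where "e \<in> M" "e \<in> {e \<in> snd H. w \<in> e}"
  using assms unfolding perfect_matchings_iff by blast

lemma num_pm_degree_one:
  assumes "w \<in> fst H" and E: "{e \<in> snd H. w \<in> e} = {e1}" and "e1 \<subseteq> fst H"
  shows "num_pm H = num_pm (delete_vertices H e1)"
proof -
  have "e1 \<in> {e \<in> snd H. w \<in> e}"
    unfolding E by simp
  then have e1: "e1 \<in> snd H" "w \<in> e1"
    by simp_all
  have "e1 \<in> M" if "M \<in> perfect_matchings H" for M
    using perfect_matching_edge_at[OF that \<open>w \<in> fst H\<close>] unfolding E by simp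
  then have "num_pm H = card {M \<in> perfect_matchings H. e1 \<in> M}"
    unfolding num_pm_def by (metis (mono_tags, lifting) Collect_cong Collect_mem_eq)
  also have "\<dots> = num_pm (delete_vertices H e1)"
    using e1 \<open>e1 \<subseteq> fst H\<close> by (intro card_perfect_matchings_containing) auto
  finally show ?thesis .
qed

lemma num_pm_degree_two:
  assumes "finite (snd H)" and "w \<in> fst H" and E: "{e \<in> snd H. w \<in> e} = {e1, e2}" and "e1 \<noteq> e2"
    and "e1 \<subseteq> fst H" "e2 \<subseteq> fst H"
  shows "num_pm H = num_pm (delete_vertices H e1) + num_pm (delete_vertices H e2)"
proof -
  let ?P = "\<lambda>e. {M \<in> perfect_matchings H. e \<in> M}"
  have "e1 \<in> {e \<in> snd H. w \<in> e}" "e2 \<in> {e \<in> snd H. w \<in> e}"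
    unfolding E by simp_all
  then have e12: "e1 \<in> snd H" "w \<in> e1" "e2 \<in> snd H" "w \<in> e2"
    by simp_all
  have "e1 \<in> M \<or> e2 \<in> M" if "M \<in> perfect_matchings H" for M
    using perfect_matching_edge_at[OF that \<open>w \<in> fst H\<close>] unfolding E by auto
  then have union: "perfect_matchings H = ?P e1 \<union> ?P e2"
    by blast
  have "\<not> (e1 \<in> M \<and> e2 \<in> M)" if "M \<in> perfect_matchings H" for M
    using that e12 \<open>w \<in> fst H\<close> \<open>e1 \<noteq> e2\<close> unfolding perfect_matchings_iff by blast
  then have disjoint: "?P e1 \<inter> ?P e2 = {}"
    by blast
  have "finite (?P e1)" "finite (?P e2)"
    using finite_perfect_matchings[OF \<open>finite (snd H)\<close>] by simp_all
  then have "num_pm H = card (?P e1) + card (?P e2)"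
    unfolding num_pm_def arg_cong[OF union, of card] by (rule card_Un_disjoint) (fact disjoint)
  also have "\<dots> = num_pm (delete_vertices H e1) + num_pm (delete_vertices H e2)"
    using e12 assms(5,6) by (subst (1 2) card_perfect_matchings_containing) auto
  finally show ?thesis .
qed

lemma num_pm_empty: "num_pm ({}, {}) = 1"
proof -
  have "perfect_matchings ({}, {}) = {{}}" unfolding perfect_matchings_def by auto
  then show ?thesis unfolding num_pm_def by simp
qed

lemma num_pm_edge: "num_pm ({p, q}, {{p, q}}) = 1"
proof -
  have "delete_vertices ({p, q}, {{p, q}}) {p, q} = ({}, {})"
    unfolding delete_vertices_def by auto
  moreover have "{e \<in> snd ({p, q}, {{p, q}}). p \<in> e} = {{p, q}}"
    by auto
  ultimately show ?thesis
    using num_pm_degree_one[of p "({p, q}, {{p, q}})" "{p, q}"] num_pm_empty by simp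
qed

lemma num_pm_glue_square:
  fixes V :: "pt set" and E p q u v
  defines "H \<equiv> (V \<union> {u, v}, E \<union> {{u, v}, {p, u}, {q, v}})"
  assumes "finite E" and "\<forall>e\<in>E. e \<subseteq> V" and "u \<notin> V" "v \<notin> V" "u \<noteq> v"
    and "p \<in> V" "q \<in> V" "p \<noteq> q"
  shows "num_pm H = num_pm (V, E) + num_pm (delete_vertices (V, E) {p, q})"
    and "num_pm (delete_vertices H {u, v}) = num_pm (V, E)"
    and "num_pm (delete_vertices H {q, v}) = num_pm (delete_vertices (V, E) {p, q})"
proof -
  have fresh: "u \<notin> e" "v \<notin> e" if "e \<in> E" for e
    using assms(3-5) that by blast+
  have new: "p \<noteq> u" "p \<noteq> v" "q \<noteq> u" "q \<noteq> v"
    using assms(4-8) by auto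
  have uv: "delete_vertices H {u, v} = (V, E)"
    unfolding delete_vertices_def H_def using fresh new assms(4-6) by auto
  have pu_qv: "delete_vertices (delete_vertices H {p, u}) {q, v} = delete_vertices (V, E) {p, q}"
    unfolding delete_vertices_def H_def using fresh new assms(4-6,9) by auto
  have qv_pu: "delete_vertices (delete_vertices H {q, v}) {p, u} = delete_vertices (V, E) {p, q}"
    unfolding delete_vertices_def H_def using fresh new assms(4-6,9) by auto
  have "num_pm H = num_pm (delete_vertices H {p, u}) + num_pm (delete_vertices H {u, v})"
  proof (rule num_pm_degree_two[of H u])
    show "{e \<in> snd H. u \<in> e} = {{p, u}, {u, v}}"
      unfolding H_def using fresh new assms(6) by auto
    show "{p, u} \<noteq> {u, v}"
      using new by (metis doubleton_eq_iff)
  qed (use assms(2,7) in \<open>auto simp: H_def\<close>)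
  moreover have "num_pm (delete_vertices H {p, u}) = num_pm (delete_vertices (V, E) {p, q})"
    unfolding pu_qv[symmetric]
    by (rule num_pm_degree_one[of v])
      (use fresh new assms(6,8,9) in \<open>auto simp: H_def delete_vertices_def\<close>)
  moreover have "num_pm (delete_vertices H {q, v}) = num_pm (delete_vertices (V, E) {p, q})"
    unfolding qv_pu[symmetric]
    by (rule num_pm_degree_one[of u])
      (use fresh new assms(6,7,9) in \<open>auto simp: H_def delete_vertices_def\<close>)
  ultimately show "num_pm H = num_pm (V, E) + num_pm (delete_vertices (V, E) {p, q})"
    and "num_pm (delete_vertices H {u, v}) = num_pm (V, E)"
    and "num_pm (delete_vertices H {q, v}) = num_pm (delete_vertices (V, E) {p, q})"
    by (simp_all add: uv)
qed

section \<open>Snake graphs\<close>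

lemmas side_edge_defs = south_edge_def north_edge_def west_edge_def east_edge_def

lemma tile_pos_0: "tile_pos ds 0 = (0, 0)"
  by (simp add: tile_pos_def)

lemma tile_pos_Suc:
  "i < length ds \<Longrightarrow> tile_pos ds (Suc i) =
     (case tile_pos ds i of (x, y) \<Rightarrow> if ds ! i then (x + 1, y) else (x, y + 1))"
  by (simp add: tile_pos_def take_Suc_conv_app_nth)

lemma tile_pos_snoc: "i \<le> length ds \<Longrightarrow> tile_pos (ds @ [b]) i = tile_pos ds i"
  by (simp add: tile_pos_def)

lemma tile_pos_sum: "i \<le> length ds \<Longrightarrow> fst (tile_pos ds i) + snd (tile_pos ds i) = int i"
  using sum_length_filter_compl[of id "take i ds"]
  by (simp add: tile_pos_def of_nat_add[symmetric] del: of_nat_add)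

lemma tile_edge_subset_vertices: "e \<in> tile_edges ds i \<Longrightarrow> e \<subseteq> tile_vertices ds i"
  by (cases "tile_pos ds i")
    (auto simp: tile_edges_def tile_vertices_def side_edge_defs)

lemma finite_snake_edges: "finite (snd (snake_graph ds))"
  by (simp add: snake_graph_def tile_edges_def)

lemma snake_edges_subset_vertices: "\<forall>e\<in>snd (snake_graph ds). e \<subseteq> fst (snake_graph ds)"
  unfolding snake_graph_def using tile_edge_subset_vertices by fastforce

lemma snake_vertex_bound:
  assumes w: "w \<in> fst (snake_graph ds)" and last: "tile_pos ds (length ds) = (x, y)"
  shows "fst w + snd w \<le> x + y + 2"
    and "fst w + snd w = x + y + 2 \<Longrightarrow> w = (x + 1, y + 1)"
proof -
  obtain i where i: "i \<le> length ds" "w \<in> tile_vertices ds i"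
    using w unfolding snake_graph_def by auto
  obtain x' y' where xy': "tile_pos ds i = (x', y')" by fastforce
  have sums: "x' + y' = int i" "x + y = int (length ds)"
    using tile_pos_sum[OF i(1)] tile_pos_sum[of "length ds" ds] xy' last by simp_all
  have w': "w \<in> {(x', y'), (x' + 1, y'), (x', y' + 1), (x' + 1, y' + 1)}"
    using i(2) xy' unfolding tile_vertices_def by simp
  show "fst w + snd w \<le> x + y + 2"
    using w' sums i(1) by auto
  assume "fst w + snd w = x + y + 2"
  then have "i = length ds"
    using w' sums i(1) by auto
  with xy' last have "x' = x" "y' = y" by auto
  with w' sums \<open>fst w + snd w = x + y + 2\<close> show "w = (x + 1, y + 1)"
    by auto
qed

lemma snake_graph_snoc:
  "snake_graph (ds @ [b]) =
    (fst (snake_graph ds) \<union> tile_vertices (ds @ [b]) (Suc (length ds)),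
     snd (snake_graph ds) \<union> tile_edges (ds @ [b]) (Suc (length ds)))"
proof -
  have "tile_vertices (ds @ [b]) i = tile_vertices ds i" "tile_edges (ds @ [b]) i = tile_edges ds i"
    if "i \<le> length ds" for i
    using tile_pos_snoc[OF that, of b]
    unfolding tile_vertices_def tile_edges_def side_edge_defs by auto
  then show ?thesis
    unfolding snake_graph_def by (simp add: atMost_Suc Un_commute)
qed

definition final_edge :: "bool list \<Rightarrow> bool \<Rightarrow> pt set" where
  "final_edge ds b = (if b then east_edge ds (length ds) else north_edge ds (length ds))"

lemma final_edge_in_tile_edges: "final_edge ds b \<in> tile_edges ds (length ds)"
  by (simp add: final_edge_def tile_edges_def)

lemma snoc_tile_geometry:
  assumes "tile_pos ds (length ds) = (x, y)"
  obtains p u v where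
    "final_edge ds b = {p, (x + 1, y + 1)}" "p \<noteq> (x + 1, y + 1)"
    "tile_vertices (ds @ [b]) (Suc (length ds)) = {p, (x + 1, y + 1), u, v}"
    "tile_edges (ds @ [b]) (Suc (length ds)) = {{p, (x + 1, y + 1)}, {u, v}, {p, u}, {(x + 1, y + 1), v}}"
    "\<And>b'. final_edge (ds @ [b]) b' = (if b = b' then {u, v} else {(x + 1, y + 1), v})"
    "fst u + snd u = x + y + 2" "u \<noteq> (x + 1, y + 1)" "fst v + snd v = x + y + 3"
proof -
  have old: "tile_pos (ds @ [b]) (length ds) = (x, y)"
    using assms tile_pos_snoc[of "length ds" ds b] by simp
  have new: "tile_pos (ds @ [b]) (Suc (length ds)) = (if b then (x + 1, y) else (x, y + 1))"
    using tile_pos_Suc[of "length ds" "ds @ [b]"] old by simp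
  show ?thesis
  proof (cases b)
    case True
    with new have "tile_pos (ds @ [b]) (Suc (length ds)) = (x + 1, y)"
      by simp
    with True assms show ?thesis
      by (intro that[of "(x + 1, y)" "(2 + x, y)" "(2 + x, y + 1)"])
        (simp_all add: final_edge_def tile_vertices_def tile_edges_def side_edge_defs insert_commute)
  next
    case False
    with new have "tile_pos (ds @ [b]) (Suc (length ds)) = (x, y + 1)"
      by simp
    with False assms show ?thesis
      by (intro that[of "(x, y + 1)" "(x, 2 + y)" "(x + 1, 2 + y)"])
        (simp_all add: final_edge_def tile_vertices_def tile_edges_def side_edge_defs insert_commute)
  qed
qed

lemma snake_graph_snoc_glue:
  obtains p q u v where
    "snake_graph (ds @ [b]) =
       (fst (snake_graph ds) \<union> {u, v}, snd (snake_graph ds) \<union> {{u, v}, {p, u}, {q, v}})"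
    "final_edge ds b = {p, q}"
    "\<And>b'. final_edge (ds @ [b]) b' = (if b = b' then {u, v} else {q, v})"
    "u \<notin> fst (snake_graph ds)" "v \<notin> fst (snake_graph ds)" "u \<noteq> v"
    "p \<in> fst (snake_graph ds)" "q \<in> fst (snake_graph ds)" "p \<noteq> q"
proof -
  obtain x y where last: "tile_pos ds (length ds) = (x, y)" by fastforce
  let ?q = "(x + 1, y + 1)"
  obtain p u v where edge: "final_edge ds b = {p, ?q}" "p \<noteq> ?q"
    and tile: "tile_vertices (ds @ [b]) (Suc (length ds)) = {p, ?q, u, v}"
      "tile_edges (ds @ [b]) (Suc (length ds)) = {{p, ?q}, {u, v}, {p, u}, {?q, v}}"
    and final: "\<And>b'. final_edge (ds @ [b]) b' = (if b = b' then {u, v} else {?q, v})"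
    and sums: "fst u + snd u = x + y + 2" "u \<noteq> ?q" "fst v + snd v = x + y + 3"
    by (rule snoc_tile_geometry[OF last, where b = b]) (rule that, assumption+)
  have "final_edge ds b \<in> snd (snake_graph ds)" "final_edge ds b \<subseteq> fst (snake_graph ds)"
    using final_edge_in_tile_edges[of ds b] tile_edge_subset_vertices[of _ ds "length ds"]
    unfolding snake_graph_def by auto
  then have old: "{p, ?q} \<in> snd (snake_graph ds)" "p \<in> fst (snake_graph ds)" "?q \<in> fst (snake_graph ds)"
    unfolding edge by auto
  have fresh: "u \<notin> fst (snake_graph ds)" "v \<notin> fst (snake_graph ds)"
    using snake_vertex_bound[OF _ last] sums by fastforce+
  have "snake_graph (ds @ [b]) =
      (fst (snake_graph ds) \<union> {u, v}, snd (snake_graph ds) \<union> {{u, v}, {p, u}, {?q, v}})"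
    unfolding snake_graph_snoc tile using old by blast
  moreover have "u \<noteq> v"
    using sums by auto
  ultimately show ?thesis
    using that[of u v p ?q] edge final fresh old by blast
qed

lemma num_pm_snake_graph_Nil:
  "(num_pm (snake_graph []), num_pm (delete_vertices (snake_graph []) (final_edge [] b))) = (2, 1)"
proof -
  let ?p = "(0, 0) :: pt" and ?q = "(1, 0) :: pt" and ?u = "(0, 1) :: pt" and ?v = "(1, 1) :: pt"
  have tile: "snake_graph [] = ({?p, ?q} \<union> {?u, ?v}, {{?p, ?q}} \<union> {{?u, ?v}, {?p, ?u}, {?q, ?v}})"
    unfolding snake_graph_def tile_vertices_def tile_edges_def side_edge_defs
    by (simp add: tile_pos_0 insert_commute)
  have final: "final_edge [] b = (if b then {?q, ?v} else {?u, ?v})"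
    by (simp add: final_edge_def east_edge_def north_edge_def tile_pos_0)
  have "delete_vertices ({?p, ?q}, {{?p, ?q}}) {?p, ?q} = ({}, {})"
    unfolding delete_vertices_def by auto
  then have counts: "num_pm ({?p, ?q}, {{?p, ?q}}) = 1"
    "num_pm (delete_vertices ({?p, ?q}, {{?p, ?q}}) {?p, ?q}) = 1"
    using num_pm_edge num_pm_empty by simp_all
  note glue = num_pm_glue_square[of "{{?p, ?q}}" "{?p, ?q}" ?u ?v ?p ?q]
  show ?thesis
    unfolding tile final using glue counts by simp
qed

lemma num_pm_snake_graph:
  "(num_pm (snake_graph ds), num_pm (delete_vertices (snake_graph ds) (final_edge ds b))) =
   matching_run (map Not (changes (False # ds @ [b]))) (1, 1)"
proof (induction ds arbitrary: b rule: rev_induct)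
  case Nil
  show ?case
    using num_pm_snake_graph_Nil by simp
next
  case (snoc x ds)
  obtain p q u v where glue:
    "snake_graph (ds @ [x]) =
       (fst (snake_graph ds) \<union> {u, v}, snd (snake_graph ds) \<union> {{u, v}, {p, u}, {q, v}})"
    "final_edge ds x = {p, q}"
    "\<And>b'. final_edge (ds @ [x]) b' = (if x = b' then {u, v} else {q, v})"
    "u \<notin> fst (snake_graph ds)" "v \<notin> fst (snake_graph ds)" "u \<noteq> v"
    "p \<in> fst (snake_graph ds)" "q \<in> fst (snake_graph ds)" "p \<noteq> q"
    by (rule snake_graph_snoc_glue) (rule that, assumption+)
  obtain m m' where run: "matching_run (map Not (changes (False # ds @ [x]))) (1, 1) = (m, m')"
    by fastforce
  have IH: "num_pm (snake_graph ds) = m" "num_pm (delete_vertices (snake_graph ds) {p, q}) = m'"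
    using snoc.IH[of x] run glue(2) by simp_all
  have "matching_run (map Not (changes (False # (ds @ [x]) @ [b]))) (1, 1) =
      matching_run (map Not (changes (False # ds @ [x])) @ [x = b]) (1, 1)"
    using changes_snoc[of "False # ds" x b] by simp
  also have "\<dots> = (m + m', if x = b then m else m')"
    unfolding matching_run_snoc run by simp
  moreover note num_pm_glue_square[OF finite_snake_edges snake_edges_subset_vertices glue(4-9)]
  ultimately show ?case
    unfolding glue(1,3) using IH by simp
qed

section \<open>Sign functions\<close>

lemma length_edge_seq: "length (edge_seq ds ed) = length ds + 2"
  by (simp add: edge_seq_def)

lemma nth_edge_seq:
  "edge_seq ds ed ! 0 = south_edge ds 0"
  "0 < j \<Longrightarrow> j \<le> length ds \<Longrightarrow> edge_seq ds ed ! j = shared_edge ds (j - 1)"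
  "edge_seq ds ed ! Suc (length ds) = ed"
  by (auto simp: edge_seq_def nth_append nth_Cons split: nat.split)

lemma shared_edge_as_entry:
  "j < length ds \<Longrightarrow> shared_edge ds j = (if ds ! j then west_edge ds (Suc j) else south_edge ds (Suc j))"
  using tile_pos_Suc[of j ds]
  by (cases "tile_pos ds j")
    (simp add: shared_edge_def side_edge_defs)

text \<open>Tile j is entered through the j-th edge of the sequence (its west edge after an east step,
  its south edge otherwise) and left through the next one (east or north).  Prefixing the
  directions with False treats the first tile as entered by a step north.\<close>
lemma sign_change_iff_straight:
  assumes f: "sign_function ds f" and j: "j \<le> length ds"
  shows "(f (edge_seq ds (final_edge ds b) ! j) \<noteq> f (edge_seq ds (final_edge ds b) ! Suc j)) =
    ((False # ds @ [b]) ! j = (False # ds @ [b]) ! Suc j)"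
proof -
  let ?D = "False # ds @ [b]" and ?es = "edge_seq ds (final_edge ds b)"
  have entry: "?es ! j = (if ?D ! j then west_edge ds j else south_edge ds j)"
  proof (cases j)
    case 0
    then show ?thesis by (simp add: nth_edge_seq)
  next
    case (Suc k)
    then show ?thesis
      using j nth_edge_seq(2)[of j ds] shared_edge_as_entry[of k ds] by (simp add: nth_append)
  qed
  have exit: "?es ! Suc j = (if ?D ! Suc j then east_edge ds j else north_edge ds j)"
  proof (cases "j < length ds")
    case True
    then show ?thesis
      using nth_edge_seq(2)[of "Suc j" ds] by (simp add: nth_append shared_edge_def)
  next
    case False
    then have "j = length ds" using j by simp
    then show ?thesis by (simp add: nth_edge_seq final_edge_def)
  qed
  have "f (north_edge ds j) = f (west_edge ds j)" "f (south_edge ds j) = f (east_edge ds j)"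
    "f (north_edge ds j) \<noteq> f (south_edge ds j)"
    using f j unfolding sign_function_def by auto
  then show ?thesis
    unfolding entry exit by (cases "?D ! j"; cases "?D ! Suc j") auto
qed

lemma changes_signs_edge_seq:
  assumes "sign_function ds f"
  shows "changes (map f (edge_seq ds (final_edge ds b))) = map Not (changes (False # ds @ [b]))"
proof (rule nth_equalityI)
  show "length (changes (map f (edge_seq ds (final_edge ds b)))) = length (map Not (changes (False # ds @ [b])))"
    by (simp add: length_changes length_edge_seq)
  fix j
  assume "j < length (changes (map f (edge_seq ds (final_edge ds b))))"
  then have "j \<le> length ds"
    by (simp add: length_changes length_edge_seq)
  then show "changes (map f (edge_seq ds (final_edge ds b))) ! j = map Not (changes (False # ds @ [b])) ! j"
    using sign_change_iff_straight[OF assms] by (simp add: nth_changes length_changes length_edge_seq)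
qed

lemma num_pm_is_G:
  assumes pos: "\<forall>a\<in>set as. 0 < a" and G: "is_G as H"
  shows "num_pm H = continuant as"
proof (cases "sum_list as \<ge> 2")
  case True
  then obtain ds f s ed where H: "H = snake_graph ds" and f: "sign_function ds f"
    and ed: "ed \<in> {north_edge ds (length ds), east_edge ds (length ds)}"
    and signs: "map f (edge_seq ds ed) = alt_signs s as"
    using G unfolding is_G_def by auto
  obtain b where b: "ed = final_edge ds b"
    using ed unfolding final_edge_def by (metis insert_iff singletonD)
  obtain a t where as: "as = a # t"
    using True by (cases as) auto
  obtain k where a: "a = Suc k"
    using pos as by (cases a) auto
  have "num_pm H = fst (matching_run (map Not (changes (False # ds @ [b]))) (1, 1))"
    using num_pm_snake_graph[of ds b] H by (metis fst_conv)
  also have "\<dots> = fst (matching_run (changes (alt_signs s as)) (1, 1))"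
    using changes_signs_edge_seq[OF f, of b] signs b by simp
  also have "\<dots> = fst (matching_run (changes ((\<not> s) # alt_signs s as)) (1, 0))"
    by (simp add: as a alt_signs_Cons)
  also have "\<dots> = continuant as"
    using matching_run_changes_alt_signs[OF pos] by (simp add: continuant_def)
  finally show ?thesis .
next
  case False
  then have "H = single_edge"
    using G unfolding is_G_def by simp
  then have "num_pm H = 1"
    using num_pm_edge by (simp add: single_edge_def)
  moreover have "as = [] \<or> as = [1]"
  proof (cases as)
    case (Cons a t)
    have "a + sum_list t < 2" "0 < a"
      using False pos Cons by auto
    then have "a = 1" "sum_list t = 0"
      by linarith+
    then have "t = []"
      using pos Cons by (cases t) (auto simp: sum_list_eq_0_iff)
    with Cons \<open>a = 1\<close> show ?thesis by simp
  qed simp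
  ultimately show ?thesis
    by (auto simp: continuant_def)
qed

theorem theorem3p9:
  fixes as :: "nat list" and G Gpal G' :: graph
  assumes "as \<noteq> []"
    and "\<forall>a\<in>set as. a > 0"
    and "is_G as G"
    and "is_G (rev as @ as) Gpal"
    and "is_G (tl as) G'"
  shows "num_pm Gpal = num_pm G ^ 2 + num_pm G' ^ 2"
proof -
  have "\<forall>a\<in>set (rev as @ as). a > 0" "\<forall>a\<in>set (tl as). a > 0"
    using assms(2) list.set_sel(2)[OF assms(1)] by auto
  then show ?thesis
    using num_pm_is_G assms continuant_rev_append by metis
qed

end
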